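(* Let $q:\chi\to[0,\infty)$ be a risk metric that is normalized and additive. A risk-sharing rule $\boldsymbol{C}$ on $\chi^n$ is the $q$-proportional RS rule if and only if it has strongly aggregate contribution-over-$q$ ratios.
   Context: Fix a probability space $(\Omega,\mathcal{F},\mathbb{P})$ and an integer $n\ge 1$. Let $\chi$ be a convex cone of non-negative random variables on this space (closed under addition and under multiplication by positive scalars) with $0\in\chi$. All equalities between random variables are understood almost surely. A pool is a vector $\boldsymbol{X}=(X_1,\ldots,X_n)\in\chi^n$, with aggregate loss $S_{\boldsymbol{X}}=\sum_{i=1}^n X_i$. A risk-sharing (RS) rule is a mapping $\boldsymbol{C}$ assigning to every pool $\boldsymbol{X}\in\chi^n$ a vector $\boldsymbol{C}[\boldsymbol{X}]=(C_1[\boldsymbol{X}],\ldots,C_n[\boldsymbol{X}])$ of real-valued random variables satisfying $\sum_{i=1}^n C_i[\boldsymbol{X}]=S_{\boldsymbol{X}}$. A risk metric $q:\chi\to[0,\infty)$ is normalized if $q[0]=0$ and additive if $q\left[\sum_{k=1}^n X_k\right]=\sum_{k=1}^n q[X_k]$ for every $\boldsymbol{X}\in\chi^n$. The $q$-proportional RS rule is specified only on pools with $q[X_j]>0$ for at least one $j$, where it is given by $C_i[\boldsymbol{X}]=\frac{q[X_i]}{\sum_{k=1}^n q[X_k]}S_{\boldsymbol{X}}$ for $i=1,\ldots,n$; a rule "is the $q$-proportional RS rule" if its contributions equal these on every such pool. The rule $\boldsymbol{C}$ has strongly aggregate contribution-over-$q$ ratios if there exists a function $\mathbf{h}=(h_1,\ldots,h_n):\mathbb{R}^2\to\mathbb{R}^n$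 (the same for all pools) such that for every pool $\boldsymbol{X}$ with $q[X_j]>0$ for at least one $j$, $C_i[\boldsymbol{X}]=q[X_i]\,h_i\big(S_{\boldsymbol{X}},q[S_{\boldsymbol{X}}]\big)$ for all $i=1,\ldots,n$. *)

theory Defs
  imports "HOL-Probability.Probability"
begin

(* Random variables are real functions on the sample space of the probability space M.
   Pools are indexed by a finite type 'n (so n = CARD('n) >= 1 is arbitrary). *)

definition risk_cone :: "'a measure \<Rightarrow> ('a \<Rightarrow> real) set \<Rightarrow> bool" where
  "risk_cone M chi \<longleftrightarrow>
     (\<forall>X\<in>chi. X \<in> borel_measurable M \<and> (AE \<omega> in M. X \<omega> \<ge> 0)) \<and>
     (\<forall>X\<in>chi. \<forall>Y\<in>chi. (\<lambda>\<omega>. X \<omega> + Y \<omega>) \<in> chi) \<and>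
     (\<forall>X\<in>chi. \<forall>c::real. c > 0 \<longrightarrow> (\<lambda>\<omega>. c * X \<omega>) \<in> chi) \<and>
     (\<lambda>\<omega>. 0) \<in> chi"

definition pool :: "('a \<Rightarrow> real) set \<Rightarrow> ('n \<Rightarrow> 'a \<Rightarrow> real) \<Rightarrow> bool" where
  "pool chi X \<longleftrightarrow> (\<forall>i. X i \<in> chi)"

definition agg :: "('n::finite \<Rightarrow> 'a \<Rightarrow> real) \<Rightarrow> 'a \<Rightarrow> real" where
  "agg X = (\<lambda>\<omega>. \<Sum>i\<in>UNIV. X i \<omega>)"

definition rs_rule :: "'a measure \<Rightarrow> ('a \<Rightarrow> real) set
    \<Rightarrow> (('n::finite \<Rightarrow> 'a \<Rightarrow> real) \<Rightarrow> 'n \<Rightarrow> 'a \<Rightarrow> real) \<Rightarrow> bool" where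
  "rs_rule M chi C \<longleftrightarrow>
     (\<forall>X. pool chi X \<longrightarrow>
        (\<forall>i. C X i \<in> borel_measurable M) \<and>
        (AE \<omega> in M. (\<Sum>i\<in>UNIV. C X i \<omega>) = agg X \<omega>))"

definition risk_metric :: "('a \<Rightarrow> real) set \<Rightarrow> (('a \<Rightarrow> real) \<Rightarrow> real) \<Rightarrow> bool" where
  "risk_metric chi q \<longleftrightarrow> (\<forall>X\<in>chi. q X \<ge> 0)"

definition normalized :: "(('a \<Rightarrow> real) \<Rightarrow> real) \<Rightarrow> bool" where
  "normalized q \<longleftrightarrow> q (\<lambda>\<omega>. 0) = 0"

definition additive :: "('a \<Rightarrow> real) set \<Rightarrow> (('a \<Rightarrow> real) \<Rightarrow> real) \<Rightarrow> 'n::finite itself \<Rightarrow> bool" where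
  "additive chi q _ \<longleftrightarrow>
     (\<forall>X::'n \<Rightarrow> 'a \<Rightarrow> real. pool chi X \<longrightarrow> q (agg X) = (\<Sum>k\<in>UNIV. q (X k)))"

definition is_q_proportional :: "'a measure \<Rightarrow> ('a \<Rightarrow> real) set \<Rightarrow> (('a \<Rightarrow> real) \<Rightarrow> real)
    \<Rightarrow> (('n::finite \<Rightarrow> 'a \<Rightarrow> real) \<Rightarrow> 'n \<Rightarrow> 'a \<Rightarrow> real) \<Rightarrow> bool" where
  "is_q_proportional M chi q C \<longleftrightarrow>
     (\<forall>X. pool chi X \<and> (\<exists>j. q (X j) > 0) \<longrightarrow>
        (\<forall>i. AE \<omega> in M. C X i \<omega> = q (X i) / (\<Sum>k\<in>UNIV. q (X k)) * agg X \<omega>))"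

definition strongly_aggregate_ratios :: "'a measure \<Rightarrow> ('a \<Rightarrow> real) set \<Rightarrow> (('a \<Rightarrow> real) \<Rightarrow> real)
    \<Rightarrow> (('n::finite \<Rightarrow> 'a \<Rightarrow> real) \<Rightarrow> 'n \<Rightarrow> 'a \<Rightarrow> real) \<Rightarrow> bool" where
  "strongly_aggregate_ratios M chi q C \<longleftrightarrow>
     (\<exists>h :: real \<Rightarrow> real \<Rightarrow> 'n \<Rightarrow> real.
        \<forall>X. pool chi X \<and> (\<exists>j. q (X j) > 0) \<longrightarrow>
          (\<forall>i. AE \<omega> in M. C X i \<omega> = q (X i) * h (agg X \<omega>) (q (agg X)) i))"

end

theory Submission
  imports Defs
begin

(* Additivity gives q[S_X] = \<Sum>k q[X_k], so the proportional rule has the ratio h_i(s, t) = s / t.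
   Conversely, the pool carrying a single risk Y in position j and 0 elsewhere has aggregate Y;
   full allocation and q[0] = 0 force q[Y] h_j(Y, q[Y]) = Y, i.e. h_j(s, t) = s / t on every pair
   (S, q[S]) with q[S] > 0 that occurs.  Taking Y = S_X yields proportionality. *)

lemma risk_cone_add:
  assumes "risk_cone M chi" "X \<in> chi" "Y \<in> chi"
  shows "(\<lambda>\<omega>. X \<omega> + Y \<omega>) \<in> chi"
  using assms unfolding risk_cone_def by blast

lemma sum_in_risk_cone:
  assumes "risk_cone M chi" "finite A" "\<And>i. i \<in> A \<Longrightarrow> X i \<in> chi"
  shows "(\<lambda>\<omega>. \<Sum>i\<in>A. X i \<omega>) \<in> chi"
  using assms(2,3)
proof (induction A rule: finite_induct)
  case empty
  then show ?case using assms(1) by (simp add: risk_cone_def)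
next
  case (insert x F)
  have "X x \<in> chi" "(\<lambda>\<omega>. \<Sum>i\<in>F. X i \<omega>) \<in> chi"
    using insert.prems insert.IH by auto
  then have "(\<lambda>\<omega>. X x \<omega> + (\<Sum>i\<in>F. X i \<omega>)) \<in> chi"
    by (rule risk_cone_add[OF assms(1)])
  then show ?case using insert.hyps by simp
qed

lemma agg_in_risk_cone:
  assumes "risk_cone M chi" "pool chi X"
  shows "agg X \<in> chi"
  using sum_in_risk_cone[OF assms(1), of UNIV X] assms(2) unfolding agg_def pool_def by simp

lemma pool_single:
  assumes "risk_cone M chi" "Y \<in> chi"
  shows "pool chi (\<lambda>k. if k = j then Y else (\<lambda>\<omega>. 0))"
  using assms unfolding pool_def risk_cone_def by auto

lemma agg_single: "agg (\<lambda>k::'n::finite. if k = j then Y else (\<lambda>\<omega>. 0)) = Y"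
  by (rule ext) (simp add: agg_def if_distrib[of "\<lambda>f. f _"])

lemma q_agg_eq_sum:
  assumes "additive chi q TYPE('n::finite)" "pool chi (X :: 'n \<Rightarrow> 'a \<Rightarrow> real)"
  shows "q (agg X) = (\<Sum>k\<in>UNIV. q (X k))"
  using assms unfolding additive_def by blast

lemma q_agg_pos:
  assumes "risk_metric chi q" "additive chi q TYPE('n::finite)"
    and "pool chi (X :: 'n \<Rightarrow> 'a \<Rightarrow> real)" "q (X j) > 0"
  shows "q (agg X) > 0"
proof -
  have "\<forall>k. q (X k) \<ge> 0" using assms(1,3) unfolding pool_def risk_metric_def by blast
  then have "q (X j) \<le> (\<Sum>k\<in>UNIV. q (X k))" by (intro member_le_sum) auto
  moreover have "q (agg X) = (\<Sum>k\<in>UNIV. q (X k))" by (rule q_agg_eq_sum[OF assms(2,3)])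
  ultimately show ?thesis using assms(4) by simp
qed

lemma proportional_imp_strongly_aggregate_ratios:
  assumes "additive chi q TYPE('n::finite)"
    and "is_q_proportional M chi q (C :: ('n \<Rightarrow> 'a \<Rightarrow> real) \<Rightarrow> 'n \<Rightarrow> 'a \<Rightarrow> real)"
  shows "strongly_aggregate_ratios M chi q C"
  unfolding strongly_aggregate_ratios_def
proof (intro exI[of _ "\<lambda>s t i. s / t"] allI impI)
  fix X :: "'n \<Rightarrow> 'a \<Rightarrow> real" and i
  assume X: "pool chi X \<and> (\<exists>j. q (X j) > 0)"
  then have "q (agg X) = (\<Sum>k\<in>UNIV. q (X k))" using q_agg_eq_sum[OF assms(1)] by blast
  then show "AE \<omega> in M. C X i \<omega> = q (X i) * (agg X \<omega> / q (agg X))"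
    using assms(2) X unfolding is_q_proportional_def by simp
qed

lemma strongly_aggregate_ratio_eq:
  fixes C :: "('n::finite \<Rightarrow> 'a \<Rightarrow> real) \<Rightarrow> 'n \<Rightarrow> 'a \<Rightarrow> real"
    and h :: "real \<Rightarrow> real \<Rightarrow> 'n \<Rightarrow> real"
  assumes "risk_cone M chi" "normalized q" "rs_rule M chi C"
    and h: "\<And>X. pool chi X \<Longrightarrow> (\<exists>j. q (X j) > 0) \<Longrightarrow>
              (\<forall>i. AE \<omega> in M. C X i \<omega> = q (X i) * h (agg X \<omega>) (q (agg X)) i)"
    and Y: "Y \<in> chi" "q Y > 0"
  shows "AE \<omega> in M. h (Y \<omega>) (q Y) j = Y \<omega> / q Y"
proof -
  define X :: "'n \<Rightarrow> 'a \<Rightarrow> real" where "X = (\<lambda>k. if k = j then Y else (\<lambda>\<omega>. 0))"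
  have pool: "pool chi X" unfolding X_def using pool_single[OF assms(1) Y(1)] .
  have agg: "agg X = Y" unfolding X_def by (rule agg_single)
  have "\<exists>j'. q (X j') > 0" using Y(2) unfolding X_def by (intro exI[of _ j]) simp
  then have "\<forall>k. AE \<omega> in M. C X k \<omega> = q (X k) * h (Y \<omega>) (q Y) k"
    using h[OF pool] agg by simp
  then have shares: "AE \<omega> in M. \<forall>k. C X k \<omega> = q (X k) * h (Y \<omega>) (q Y) k"
    by (simp add: AE_finite_all[of UNIV, simplified])
  have total: "AE \<omega> in M. (\<Sum>k\<in>UNIV. C X k \<omega>) = Y \<omega>"
    using assms(3) pool agg unfolding rs_rule_def by metis
  show ?thesis
    using shares total
  proof eventually_elim
    case (elim \<omega>)
    have "(\<Sum>k\<in>UNIV. C X k \<omega>) = (\<Sum>k\<in>UNIV. if k = j then q Y * h (Y \<omega>) (q Y) j else 0)"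
      using elim(1) assms(2) unfolding X_def normalized_def by (intro sum.cong) auto
    then have "q Y * h (Y \<omega>) (q Y) j = Y \<omega>" using elim(2) by simp
    then show ?case using Y(2) by (simp add: field_simps)
  qed
qed

lemma strongly_aggregate_ratios_imp_proportional:
  assumes "risk_cone M chi" "risk_metric chi q" "normalized q"
    and "additive chi q TYPE('n::finite)" "rs_rule M chi C"
    and "strongly_aggregate_ratios M chi q (C :: ('n \<Rightarrow> 'a \<Rightarrow> real) \<Rightarrow> 'n \<Rightarrow> 'a \<Rightarrow> real)"
  shows "is_q_proportional M chi q C"
  unfolding is_q_proportional_def
proof (intro allI impI)
  obtain h :: "real \<Rightarrow> real \<Rightarrow> 'n \<Rightarrow> real" where
    h: "\<And>X. pool chi X \<Longrightarrow> (\<exists>j. q (X j) > 0) \<Longrightarrow>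
          (\<forall>i. AE \<omega> in M. C X i \<omega> = q (X i) * h (agg X \<omega>) (q (agg X)) i)"
    using assms(6) unfolding strongly_aggregate_ratios_def by blast
  fix X :: "'n \<Rightarrow> 'a \<Rightarrow> real" and i
  assume X: "pool chi X \<and> (\<exists>j. q (X j) > 0)"
  then have pool: "pool chi X" by blast
  have additive: "q (agg X) = (\<Sum>k\<in>UNIV. q (X k))" by (rule q_agg_eq_sum[OF assms(4) pool])
  have pos: "q (agg X) > 0" using X q_agg_pos[OF assms(2,4) pool] by blast
  have "AE \<omega> in M. C X i \<omega> = q (X i) * h (agg X \<omega>) (q (agg X)) i"
    using h[OF pool] X by blast
  moreover have "AE \<omega> in M. h (agg X \<omega>) (q (agg X)) i = agg X \<omega> / q (agg X)"
    using strongly_aggregate_ratio_eq[where M = M and chi = chi and q = q and C = C and h = h,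
        OF assms(1,3,5) h agg_in_risk_cone[OF assms(1) pool] pos] .
  ultimately show "AE \<omega> in M. C X i \<omega> = q (X i) / (\<Sum>k\<in>UNIV. q (X k)) * agg X \<omega>"
    by eventually_elim (simp add: additive)
qed

theorem theorem4:
  fixes M :: "'a measure" and chi :: "('a \<Rightarrow> real) set"
    and q :: "('a \<Rightarrow> real) \<Rightarrow> real"
    and C :: "('n::finite \<Rightarrow> 'a \<Rightarrow> real) \<Rightarrow> 'n \<Rightarrow> 'a \<Rightarrow> real"
  assumes "prob_space M"
    and "risk_cone M chi"
    and "risk_metric chi q"
    and "normalized q"
    and "additive chi q TYPE('n)"
    and "rs_rule M chi C"
  shows "is_q_proportional M chi q C \<longleftrightarrow> strongly_aggregate_ratios M chi q C"
  using proportional_imp_strongly_aggregate_ratios[OF assms(5)]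
    strongly_aggregate_ratios_imp_proportional[OF assms(2-6)]
  by blast

end
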